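(* For every finite simple undirected graph $G$, $\chi_{pcf}(G)\leq 2\,\mathrm{scol}_{2}(G)-1$.
   Context: All graphs are finite, simple and undirected. For a graph $G$, a $c$-colouring is a function $\psi:V(G)\to C$ with $|C|\le c$; it is proper if $\psi(u)\neq\psi(v)$ for every edge $uv$. With $N(v)=\{w: vw\in E(G)\}$, a colouring $\psi$ is conflict-free if for every vertex $v$ with $|N(v)|>0$ there is a colour $\alpha$ such that exactly one $w\in N(v)$ has $\psi(w)=\alpha$. The proper conflict-free chromatic number $\chi_{pcf}(G)$ is the minimum $c$ such that $G$ has a proper conflict-free $c$-colouring. For a total order $\preceq$ of $V(G)$, a vertex $v$ and an integer $s\ge1$, let $R(G,\preceq,v,s)$ be the set of vertices $w$ such that $w\preceq v$ and there is a path $v=w_0,w_1,\dots,w_{s'}=w$ of length $s'\in\{0,1,\dots,s\}$ with $v\prec w_i$ for all $i\in\{1,\dots,s'-1\}$. The $s$-strong colouring number $\mathrm{scol}_s(G)$ is the minimum integer $c$ such that there is a total order $\preceq$ of $V(G)$ with $|R(G,\preceq,v,s)|\le c$ for every vertex $v$. *)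

theory Defs
  imports Main
begin

definition simple_graph :: "'a set \<Rightarrow> ('a \<Rightarrow> 'a \<Rightarrow> bool) \<Rightarrow> bool" where
  "simple_graph V E \<longleftrightarrow> finite V \<and> (\<forall>u v. E u v \<longrightarrow> u \<in> V \<and> v \<in> V)
     \<and> (\<forall>u v. E u v \<longrightarrow> E v u) \<and> (\<forall>v. \<not> E v v)"

definition nbhd :: "'a set \<Rightarrow> ('a \<Rightarrow> 'a \<Rightarrow> bool) \<Rightarrow> 'a \<Rightarrow> 'a set" where
  "nbhd V E v = {w \<in> V. E v w}"

definition pcf_colouring :: "'a set \<Rightarrow> ('a \<Rightarrow> 'a \<Rightarrow> bool) \<Rightarrow> nat \<Rightarrow> ('a \<Rightarrow> nat) \<Rightarrow> bool" where
  "pcf_colouring V E c \<psi> \<longleftrightarrow>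
     card (\<psi> ` V) \<le> c
     \<and> (\<forall>u\<in>V. \<forall>v\<in>V. E u v \<longrightarrow> \<psi> u \<noteq> \<psi> v)
     \<and> (\<forall>v\<in>V. nbhd V E v \<noteq> {} \<longrightarrow> (\<exists>\<alpha>. card {w \<in> nbhd V E v. \<psi> w = \<alpha>} = 1))"

definition chi_pcf :: "'a set \<Rightarrow> ('a \<Rightarrow> 'a \<Rightarrow> bool) \<Rightarrow> nat" where
  "chi_pcf V E = (LEAST c. \<exists>\<psi>. pcf_colouring V E c \<psi>)"

text \<open>A path in (V,E) given as a list of distinct vertices, consecutive ones adjacent;
its length is (length ps - 1).\<close>
definition is_path :: "'a set \<Rightarrow> ('a \<Rightarrow> 'a \<Rightarrow> bool) \<Rightarrow> 'a list \<Rightarrow> bool" where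
  "is_path V E ps \<longleftrightarrow> ps \<noteq> [] \<and> set ps \<subseteq> V \<and> distinct ps
     \<and> (\<forall>i. Suc i < length ps \<longrightarrow> E (ps ! i) (ps ! Suc i))"

text \<open>R(G, order r, v, s); the total order is a relation r with (x,y) \<in> r meaning x \<preceq> y.\<close>
definition reach_set :: "'a set \<Rightarrow> ('a \<Rightarrow> 'a \<Rightarrow> bool) \<Rightarrow> 'a rel \<Rightarrow> 'a \<Rightarrow> nat \<Rightarrow> 'a set" where
  "reach_set V E r v s = {w \<in> V. (w, v) \<in> r \<and>
     (\<exists>ps. is_path V E ps \<and> hd ps = v \<and> last ps = w \<and> length ps - 1 \<le> s
        \<and> (\<forall>i. 0 < i \<and> i < length ps - 1 \<longrightarrow> (v, ps ! i) \<in> r \<and> ps ! i \<noteq> v))}"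

definition scol :: "nat \<Rightarrow> 'a set \<Rightarrow> ('a \<Rightarrow> 'a \<Rightarrow> bool) \<Rightarrow> nat" where
  "scol s V E = (LEAST c. \<exists>r. linear_order_on V r \<and> (\<forall>v\<in>V. card (reach_set V E r v s) \<le> c))"

end

theory Submission
  imports Defs
begin

(* Fix an order witnessing scol_2 = k and let m(v) be the earliest neighbour of a non-isolated
   vertex v. Colour greedily along the order so that x avoids the colour of every earlier y that
   is a neighbour of x or equals m(v) for a common neighbour v of x and y. The result is proper,
   and m(v) is the only neighbour of v with its colour, so it is conflict-free. An earlier such y
   lies in R(x,2) - {x}, or is m(v) for an earlier neighbour v of x, which lies in R(x,2) - {x}
   as well: if v comes after x, then x v y is a path witnessing y in R(x,2). So at most 2k - 2
   colours are blocked at x, and 2k - 1 colours suffice. *)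

lemma greedy_colouring:
  fixes f :: "'a \<Rightarrow> 'b::linorder" and C :: "'a \<Rightarrow> 'a \<Rightarrow> bool"
  assumes "finite S" and "\<forall>x\<in>S. card {y\<in>S. f y < f x \<and> C x y} < d"
  shows "\<exists>\<psi>. (\<forall>x\<in>S. \<psi> x < d) \<and> (\<forall>x\<in>S. \<forall>y\<in>S. f y < f x \<longrightarrow> C x y \<longrightarrow> \<psi> x \<noteq> \<psi> y)"
  using assms
proof (induction S rule: finite_ranking_induct[where f = f])
  case empty
  then show ?case by simp
next
  case (insert x S)
  show ?case
  proof (cases "x \<in> S")
    case True
    then show ?thesis using insert by (simp add: insert_absorb)
  next
    case False
    have "\<forall>z\<in>S. card {y\<in>S. f y < f z \<and> C z y} < d"
    proof
      fix z assume "z \<in> S"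
      have "card {y\<in>S. f y < f z \<and> C z y} \<le> card {y\<in>insert x S. f y < f z \<and> C z y}"
        using insert.hyps(1) by (intro card_mono) auto
      then show "card {y\<in>S. f y < f z \<and> C z y} < d"
        using insert.prems \<open>z \<in> S\<close> by fastforce
    qed
    then obtain \<psi> where \<psi>_lt: "\<forall>z\<in>S. \<psi> z < d"
      and \<psi>_sep: "\<forall>z\<in>S. \<forall>y\<in>S. f y < f z \<longrightarrow> C z y \<longrightarrow> \<psi> z \<noteq> \<psi> y"
      using insert.IH by blast
    define K where "K = {y\<in>insert x S. f y < f x \<and> C x y}"
    have "card (\<psi> ` K) < card {..<d}"
      using card_image_le[of K \<psi>] insert.prems insert.hyps(1) unfolding K_def by fastforce
    moreover have "finite K" using insert.hyps(1) by (simp add: K_def)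
    ultimately have "\<not> {..<d} \<subseteq> \<psi> ` K"
      by (meson card_mono finite_imageI not_le)
    then obtain c where c: "c < d" "c \<notin> \<psi> ` K" by blast
    show ?thesis
    proof (intro exI[of _ "\<psi>(x := c)"] conjI ballI impI)
      fix z assume "z \<in> insert x S"
      then show "(\<psi>(x := c)) z < d" using \<psi>_lt c by auto
    next
      fix z y assume z: "z \<in> insert x S" and y: "y \<in> insert x S" and "f y < f z" "C z y"
      show "(\<psi>(x := c)) z \<noteq> (\<psi>(x := c)) y"
      proof (cases "z = x")
        case True
        then show ?thesis using c y \<open>f y < f z\<close> \<open>C z y\<close> unfolding K_def by auto
      next
        case False
        then have "z \<in> S" using z by simp
        then have "y \<noteq> x" using insert.hyps(2) \<open>f y < f z\<close> by fastforce
        then show ?thesis using False \<open>z \<in> S\<close> y \<psi>_sep \<open>f y < f z\<close> \<open>C z y\<close> by auto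
      qed
    qed
  qed
qed

definition order_rank :: "'a set \<Rightarrow> 'a rel \<Rightarrow> 'a \<Rightarrow> nat" where
  "order_rank A r x = card {z\<in>A. (z, x) \<in> r \<and> z \<noteq> x}"

lemma order_rank_strict_mono:
  assumes "linear_order_on A r" "finite A" "x \<in> A" "(x, y) \<in> r" "x \<noteq> y"
  shows "order_rank A r x < order_rank A r y"
  unfolding order_rank_def
proof (rule psubset_card_mono)
  show "finite {z\<in>A. (z, y) \<in> r \<and> z \<noteq> y}" using assms(2) by simp
  have "trans r" "antisym r" using assms(1) by (auto dest: partial_order_onD simp: linear_order_on_def)
  then show "{z\<in>A. (z, x) \<in> r \<and> z \<noteq> x} \<subset> {z\<in>A. (z, y) \<in> r \<and> z \<noteq> y}"
    using assms(3-5) by (auto dest: transD antisymD)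
qed

lemma order_rank_less_iff:
  assumes "linear_order_on A r" "finite A" "x \<in> A" "y \<in> A"
  shows "order_rank A r x < order_rank A r y \<longleftrightarrow> (x, y) \<in> r \<and> x \<noteq> y"
  using order_rank_strict_mono[OF assms(1,2)] assms(1,3,4)
  by (metis less_asym linear_order_on_def total_on_def)

lemma reach_set_subset: "reach_set V E r v s \<subseteq> V"
  by (auto simp: reach_set_def)

lemma reach_set_refl: "v \<in> V \<Longrightarrow> (v, v) \<in> r \<Longrightarrow> v \<in> reach_set V E r v s"
  by (auto simp: reach_set_def is_path_def intro!: exI[of _ "[v]"])

lemma reach_set_edge:
  assumes "v \<in> V" "w \<in> V" "E v w" "v \<noteq> w" "(w, v) \<in> r" "1 \<le> s"
  shows "w \<in> reach_set V E r v s"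
proof -
  have "is_path V E [v, w]" using assms by (auto simp: is_path_def less_Suc_eq)
  then show ?thesis using assms unfolding reach_set_def by (auto intro!: exI[of _ "[v, w]"])
qed

lemma reach_set_two_path:
  assumes "v \<in> V" "u \<in> V" "w \<in> V" "distinct [v, u, w]" "E v u" "E u w"
    and "(v, u) \<in> r" "(w, v) \<in> r" "2 \<le> s"
  shows "w \<in> reach_set V E r v s"
proof -
  have "is_path V E [v, u, w]"
    using assms by (auto simp: is_path_def less_Suc_eq nth_Cons split: nat.split)
  moreover have "\<forall>i. 0 < i \<and> i < 2 \<longrightarrow> (v, [v, u, w] ! i) \<in> r \<and> [v, u, w] ! i \<noteq> v"
    using assms by (auto simp: less_Suc_eq)
  ultimately show ?thesis using assms unfolding reach_set_def by (auto intro!: exI[of _ "[v, u, w]"])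
qed

lemma scol_attained:
  assumes "finite V"
  shows "\<exists>r. linear_order_on V r \<and> (\<forall>v\<in>V. card (reach_set V E r v s) \<le> scol s V E)"
proof -
  obtain r where "well_order_on V r" using well_order_on by blast
  then have "linear_order_on V r \<and> (\<forall>v\<in>V. card (reach_set V E r v s) \<le> card V)"
    using assms by (auto simp: well_order_on_def intro!: card_mono reach_set_subset)
  then have "\<exists>c r. linear_order_on V r \<and> (\<forall>v\<in>V. card (reach_set V E r v s) \<le> c)"
    by blast
  then show ?thesis unfolding scol_def by (rule LeastI_ex)
qed

locale ordered_graph =
  fixes V :: "'a set" and E :: "'a \<Rightarrow> 'a \<Rightarrow> bool" and r :: "'a rel"
  assumes graph: "simple_graph V E" and order: "linear_order_on V r"
begin

lemma finite_vertices: "finite V"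
  and edge_vertices: "E u v \<Longrightarrow> u \<in> V \<and> v \<in> V"
  and edge_sym: "E u v \<Longrightarrow> E v u"
  and edge_irrefl: "\<not> E v v"
  using graph by (auto simp: simple_graph_def)

abbreviation rank :: "'a \<Rightarrow> nat" where
  "rank \<equiv> order_rank V r"

lemma rank_less_iff: "x \<in> V \<Longrightarrow> y \<in> V \<Longrightarrow> rank x < rank y \<longleftrightarrow> (x, y) \<in> r \<and> x \<noteq> y"
  by (rule order_rank_less_iff[OF order finite_vertices])

lemma rank_neq: "x \<in> V \<Longrightarrow> y \<in> V \<Longrightarrow> x \<noteq> y \<Longrightarrow> rank x \<noteq> rank y"
  using order rank_less_iff by (metis linear_order_on_def total_on_def)

definition first_nbr :: "'a \<Rightarrow> 'a" where
  "first_nbr v = arg_min_on rank (nbhd V E v)"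

lemma first_nbr:
  assumes "E v w"
  shows "E v (first_nbr v)" and "rank (first_nbr v) \<le> rank w"
proof -
  have "finite (nbhd V E v)" "w \<in> nbhd V E v"
    using finite_vertices edge_vertices assms by (auto simp: nbhd_def)
  then show "E v (first_nbr v)" "rank (first_nbr v) \<le> rank w"
    unfolding first_nbr_def
    using arg_min_if_finite(1)[of "nbhd V E v" rank] arg_min_least[of "nbhd V E v" w rank]
    by (auto simp: nbhd_def)
qed

definition conflict :: "'a \<Rightarrow> 'a \<Rightarrow> bool" where
  "conflict x y \<longleftrightarrow> E x y \<or> (\<exists>v. E v x \<and> E v y \<and> y = first_nbr v)"

lemma earlier_conflicts_subset:
  assumes "x \<in> V"
  defines "A \<equiv> reach_set V E r x 2 - {x}"
  shows "{y\<in>V. rank y < rank x \<and> conflict x y} \<subseteq> A \<union> first_nbr ` {v\<in>A. E x v}"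
proof
  fix y assume "y \<in> {y\<in>V. rank y < rank x \<and> conflict x y}"
  then have y: "y \<in> V" "(y, x) \<in> r" "y \<noteq> x" and "conflict x y"
    using rank_less_iff assms(1) by auto
  show "y \<in> A \<union> first_nbr ` {v\<in>A. E x v}"
  proof (cases "E x y")
    case True
    then show ?thesis using reach_set_edge[of x V y E r 2] assms(1) y by (simp add: A_def)
  next
    case False
    then obtain v where v: "E v x" "E v y" "y = first_nbr v"
      using \<open>conflict x y\<close> by (auto simp: conflict_def)
    then have "v \<in> V" "v \<noteq> x" "v \<noteq> y" using edge_vertices edge_irrefl by blast+
    show ?thesis
    proof (cases "(v, x) \<in> r")
      case True
      then have "v \<in> A"
        using reach_set_edge[of x V v E r 2] edge_sym assms(1) \<open>v \<in> V\<close> \<open>v \<noteq> x\<close> v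
        by (simp add: A_def)
      then show ?thesis using v edge_sym by blast
    next
      case False
      then have "(x, v) \<in> r"
        using order assms(1) \<open>v \<in> V\<close> \<open>v \<noteq> x\<close> by (auto simp: linear_order_on_def total_on_def)
      then have "y \<in> A"
        using reach_set_two_path[of x V v y E r 2] assms(1) y v \<open>v \<in> V\<close> \<open>v \<noteq> x\<close> \<open>v \<noteq> y\<close> edge_sym
        by (simp add: A_def)
      then show ?thesis by blast
    qed
  qed
qed

lemma card_earlier_conflicts_less:
  assumes "x \<in> V"
  shows "card {y\<in>V. rank y < rank x \<and> conflict x y} < 2 * card (reach_set V E r x 2) - 1"
proof -
  define R where "R = reach_set V E r x 2"
  define A where "A = R - {x}"
  have "finite R"
    unfolding R_def using reach_set_subset finite_vertices by (rule finite_subset)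
  moreover have "x \<in> R"
    unfolding R_def using assms order
    by (auto intro: reach_set_refl simp: linear_order_on_def partial_order_on_def
        preorder_on_def refl_on_def)
  ultimately have "card R > 0" and card_A: "card A = card R - 1" and "finite A"
    by (auto simp: A_def card_gt_0_iff)
  have "card (first_nbr ` {v\<in>A. E x v}) \<le> card {v\<in>A. E x v}"
    using \<open>finite A\<close> by (intro card_image_le) simp
  also have "\<dots> \<le> card A"
    using \<open>finite A\<close> by (intro card_mono) auto
  finally have card_image: "card (first_nbr ` {v\<in>A. E x v}) \<le> card A" .
  have "card {y\<in>V. rank y < rank x \<and> conflict x y} \<le> card (A \<union> first_nbr ` {v\<in>A. E x v})"
    using earlier_conflicts_subset[OF assms] \<open>finite A\<close>
    by (intro card_mono) (simp_all add: A_def R_def)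
  also have "\<dots> \<le> card A + card (first_nbr ` {v\<in>A. E x v})"
    by (rule card_Un_le)
  also have "\<dots> \<le> card A + card A"
    using card_image by simp
  finally show ?thesis using card_A \<open>card R > 0\<close> unfolding R_def by linarith
qed

lemma pcf_colouring_if_separates_conflicts:
  assumes sep: "\<forall>x\<in>V. \<forall>y\<in>V. rank y < rank x \<longrightarrow> conflict x y \<longrightarrow> \<psi> x \<noteq> \<psi> y"
    and "card (\<psi> ` V) \<le> c"
  shows "pcf_colouring V E c \<psi>"
proof -
  have proper: "\<psi> u \<noteq> \<psi> v" if "E u v" for u v
  proof -
    have "u \<in> V" "v \<in> V" "rank u \<noteq> rank v"
      using that edge_vertices edge_irrefl rank_neq by blast+
    then show ?thesis
      using sep edge_sym that by (metis conflict_def linorder_neqE_nat)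
  qed
  have unique: "{w \<in> nbhd V E v. \<psi> w = \<psi> (first_nbr v)} = {first_nbr v}" if "E v w0" for v w0
  proof (intro equalityI subsetI)
    fix w assume "w \<in> {w \<in> nbhd V E v. \<psi> w = \<psi> (first_nbr v)}"
    then have w: "w \<in> V" "E v w" "\<psi> w = \<psi> (first_nbr v)" by (auto simp: nbhd_def)
    have "first_nbr v \<in> V" using first_nbr(1) that edge_vertices by blast
    moreover have "conflict w (first_nbr v)"
      using w first_nbr(1)[OF that] by (auto simp: conflict_def)
    moreover have "rank (first_nbr v) \<le> rank w" using first_nbr(2) w by blast
    ultimately show "w \<in> {first_nbr v}"
      using sep w rank_neq by (metis le_neq_implies_less singletonI)
  next
    fix w assume "w \<in> {first_nbr v}"
    then show "w \<in> {w \<in> nbhd V E v. \<psi> w = \<psi> (first_nbr v)}"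
      using first_nbr(1) that edge_vertices by (auto simp: nbhd_def)
  qed
  have "\<exists>\<alpha>. card {w \<in> nbhd V E v. \<psi> w = \<alpha>} = 1" if nonisolated: "nbhd V E v \<noteq> {}" for v
  proof -
    obtain w0 where "E v w0" using nonisolated unfolding nbhd_def by blast
    then have "card {w \<in> nbhd V E v. \<psi> w = \<psi> (first_nbr v)} = 1" by (simp add: unique)
    then show ?thesis ..
  qed
  then show ?thesis using proper assms(2) by (simp add: pcf_colouring_def)
qed

end

theorem theorem1:
  fixes V :: "'a set" and E :: "'a \<Rightarrow> 'a \<Rightarrow> bool"
  assumes "simple_graph V E"
  shows "chi_pcf V E \<le> 2 * scol 2 V E - 1"
proof -
  have "finite V" using assms by (simp add: simple_graph_def)
  then obtain r where order: "linear_order_on V r"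
    and reach: "\<forall>v\<in>V. card (reach_set V E r v 2) \<le> scol 2 V E"
    using scol_attained by blast
  interpret ordered_graph V E r using assms order by unfold_locales
  have "\<forall>x\<in>V. card {y\<in>V. rank y < rank x \<and> conflict x y} < 2 * scol 2 V E - 1"
    using card_earlier_conflicts_less reach by fastforce
  then obtain \<psi> where colours: "\<forall>x\<in>V. \<psi> x < 2 * scol 2 V E - 1"
    and sep: "\<forall>x\<in>V. \<forall>y\<in>V. rank y < rank x \<longrightarrow> conflict x y \<longrightarrow> \<psi> x \<noteq> \<psi> y"
    using greedy_colouring[OF finite_vertices] by blast
  have "card (\<psi> ` V) \<le> 2 * scol 2 V E - 1"
    using colours card_mono[of "{..<2 * scol 2 V E - 1}" "\<psi> ` V"] by auto
  then have "pcf_colouring V E (2 * scol 2 V E - 1) \<psi>"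
    using pcf_colouring_if_separates_conflicts sep by blast
  then show ?thesis unfolding chi_pcf_def by (blast intro: Least_le)
qed

end
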